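(* Suppose $\Lambda_i\in\mathcal H_I$ with $0<\lambda_i^-\le\lambda_i^+<1$ for $i\in[n]$, and $w_1,\dots,w_n$ are continuous and subadditive capacities. Let $$\kappa=\inf_{(A_1,\dots,A_n)\in\Pi_n(\Omega)}\ \min_{i\in[n]}\Big(\frac{w_i(A_i)}{\lambda_i^-}\vee\max_{j\ne i}\frac{w_j(A_j)}{\lambda_j^+}\Big).$$ (i) If $\kappa<1$, then $\Gamma_{\mathbf\Lambda,\mathbf w}(X)=-\infty$ for every $X\in\mathcal X$. (ii) If $\kappa>1$, then $\Gamma_{\mathbf\Lambda,\mathbf w}(X)>-\infty$ for every $X\in\mathcal X$.
   Context: $\mathcal X$: real-valued random variables on $(\Omega,\mathcal F)$. Capacity: monotone $w:\mathcal F\to[0,1]$, $w(\emptyset)=0$, $w(\Omega)=1$; continuous if $w(A_k)\to0$ whenever $A_k\downarrow\emptyset$; subadditive if $w(A\cup B)\le w(A)+w(B)$. $\mathcal H_I$: increasing functions $\mathbb R\to(0,1)$; $\lambda_i^-=\inf_x\Lambda_i(x)$, $\lambda_i^+=\sup_x\Lambda_i(x)$. $\Pi_n(\Omega)$: measurable partitions of $\Omega$ into $n$ sets. $\mathcal A^{\mathbf\Lambda,\mathbf w}_x=\{\bigcup_iA_i: A_i\in\mathcal F, w_i(A_i)\le\Lambda_i(y_i)\ \forall i\text{ for some }(y_i)\in\mathbb R^n,\sum_iy_i=x\}$ and $\Gamma_{\mathbf\Lambda,\mathbf w}(X)=\inf\{x\in\mathbb R:\{X>x\}\in\mathcal A^{\mathbf\Lambda,\mathbf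 w}_x\}$ (the inf-convolution of the $\Lambda_i\mathrm{VaR}^{w_i}$). *)

theory Defs
  imports "HOL-Analysis.Analysis"
begin

definition capacity :: "'a measure \<Rightarrow> ('a set \<Rightarrow> real) \<Rightarrow> bool" where
  "capacity M w \<longleftrightarrow>
     (\<forall>A\<in>sets M. 0 \<le> w A \<and> w A \<le> 1) \<and>
     (\<forall>A\<in>sets M. \<forall>B\<in>sets M. A \<subseteq> B \<longrightarrow> w A \<le> w B) \<and>
     w {} = 0 \<and> w (space M) = 1"

definition continuous_capacity :: "'a measure \<Rightarrow> ('a set \<Rightarrow> real) \<Rightarrow> bool" where
  "continuous_capacity M w \<longleftrightarrow>
     (\<forall>A :: nat \<Rightarrow> 'a set. (\<forall>k. A k \<in> sets M) \<longrightarrow> decseq A \<longrightarrow> (\<Inter>k. A k) = {}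
        \<longrightarrow> (\<lambda>k. w (A k)) \<longlonglongrightarrow> 0)"

definition subadditive_capacity :: "'a measure \<Rightarrow> ('a set \<Rightarrow> real) \<Rightarrow> bool" where
  "subadditive_capacity M w \<longleftrightarrow>
     (\<forall>A\<in>sets M. \<forall>B\<in>sets M. w (A \<union> B) \<le> w A + w B)"

definition H_I :: "(real \<Rightarrow> real) set" where
  "H_I = {L. mono L \<and> (\<forall>x. 0 < L x \<and> L x < 1)}"

definition lam_minus :: "(real \<Rightarrow> real) \<Rightarrow> real" where
  "lam_minus L = Inf (range L)"

definition lam_plus :: "(real \<Rightarrow> real) \<Rightarrow> real" where
  "lam_plus L = Sup (range L)"

definition partitions :: "'a measure \<Rightarrow> nat \<Rightarrow> (nat \<Rightarrow> 'a set) set" where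
  "partitions M n = {A. (\<forall>i<n. A i \<in> sets M) \<and> disjoint_family_on A {..<n}
                         \<and> (\<Union>i<n. A i) = space M}"

definition admissible_sets ::
  "'a measure \<Rightarrow> nat \<Rightarrow> (nat \<Rightarrow> real \<Rightarrow> real) \<Rightarrow> (nat \<Rightarrow> 'a set \<Rightarrow> real) \<Rightarrow> real \<Rightarrow> 'a set set" where
  "admissible_sets M n L w x =
     {\<Union>i<n. A i | A. (\<forall>i<n. A i \<in> sets M) \<and>
        (\<exists>y :: nat \<Rightarrow> real. (\<Sum>i<n. y i) = x \<and> (\<forall>i<n. w i (A i) \<le> L i (y i)))}"

text \<open>Inf-convolution of the Lambda-VaR's, valued in the extended reals.\<close>
definition Gamma ::
  "'a measure \<Rightarrow> nat \<Rightarrow> (nat \<Rightarrow> real \<Rightarrow> real) \<Rightarrow> (nat \<Rightarrow> 'a set \<Rightarrow> real) \<Rightarrow> ('a \<Rightarrow> real) \<Rightarrow> ereal" where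
  "Gamma M n L w X = Inf {ereal x | x. {\<omega>\<in>space M. X \<omega> > x} \<in> admissible_sets M n L w x}"

definition kappa ::
  "'a measure \<Rightarrow> nat \<Rightarrow> (nat \<Rightarrow> real \<Rightarrow> real) \<Rightarrow> (nat \<Rightarrow> 'a set \<Rightarrow> real) \<Rightarrow> real" where
  "kappa M n L w = Inf {Min ((\<lambda>i. Max (insert (w i (A i) / lam_minus (L i))
                                     ((\<lambda>j. w j (A j) / lam_plus (L j)) ` ({..<n} - {i})))) ` {..<n})
                        | A. A \<in> partitions M n}"

end

theory Submission
  imports Defs
begin

(* If kappa < 1, some partition A and index i have w i (A i) < lam_minus (L i) <= L i y for all y,
  and w j (A j) < L j (y j) for suitable levels y j, j /= i. Letting y i = x - (sum of the other
  y j) absorb an arbitrary x, the pieces A j cut down to {X > x} show that {X > x} is admissible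
  at every level x, so Gamma = -infinity.

  Conversely, if Gamma = -infinity, {X > x} has admissible representations for arbitrarily
  negative x. As the levels sum to x, some y i lies so far left that L i (y i) is at most
  (1 + d) lam_minus (L i), while continuity of w i makes w i {X <= x} at most d lam_minus (L i).
  Adding {X <= x} to A i (subadditivity) and disjointifying the cover gives a partition with
  kappa_objective at most 1 + 2d, hence kappa <= 1. *)

lemma H_I_bdd:
  assumes "L \<in> H_I"
  shows "bdd_below (range L)" and "bdd_above (range L)"
  using assms unfolding H_I_def bdd_below_def bdd_above_def
  by (metis (no_types, lifting) less_eq_real_def mem_Collect_eq rangeE)+

lemma lam_minus_le: "L \<in> H_I \<Longrightarrow> lam_minus L \<le> L y"
  unfolding lam_minus_def by (auto intro!: cInf_lower H_I_bdd)

lemma le_lam_plus: "L \<in> H_I \<Longrightarrow> L y \<le> lam_plus L"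
  unfolding lam_plus_def by (auto intro!: cSup_upper H_I_bdd)

lemma lam_plus_pos:
  assumes "L \<in> H_I"
  shows "0 < lam_plus L"
proof -
  have "0 < L 0" using assms by (simp add: H_I_def)
  then show ?thesis using le_lam_plus[OF assms, of 0] by linarith
qed

lemma less_lam_plusE:
  assumes "L \<in> H_I" "c < lam_plus L"
  obtains y where "c < L y"
proof -
  have "c < Sup (range L)" using assms(2) unfolding lam_plus_def .
  then have "\<exists>z\<in>range L. c < z"
    using H_I_bdd(2)[OF assms(1)] by (subst (asm) less_cSup_iff) auto
  then show ?thesis using that by blast
qed

lemma H_I_eventually_less:
  assumes "L \<in> H_I" "lam_minus L < c"
  shows "eventually (\<lambda>y. L y < c) at_bot"
proof -
  obtain y0 where "L y0 < c"
    using assms(2) cInf_lessD[of "range L" c] unfolding lam_minus_def by blast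
  moreover have "mono L" using assms(1) unfolding H_I_def by blast
  ultimately show ?thesis
    unfolding eventually_at_bot_linorder by (meson le_less_trans monoD)
qed

lemma capacity_nonneg: "capacity M w \<Longrightarrow> A \<in> sets M \<Longrightarrow> 0 \<le> w A"
  unfolding capacity_def by blast

lemma capacity_mono: "capacity M w \<Longrightarrow> A \<in> sets M \<Longrightarrow> B \<in> sets M \<Longrightarrow> A \<subseteq> B \<Longrightarrow> w A \<le> w B"
  unfolding capacity_def by blast

lemma continuous_capacity_lower_tail:
  fixes X :: "'a \<Rightarrow> real"
  assumes "continuous_capacity M w" "X \<in> borel_measurable M"
  shows "(\<lambda>k. w {\<omega>\<in>space M. X \<omega> \<le> - real k}) \<longlonglongrightarrow> 0"
proof -
  define C where "C k = {\<omega>\<in>space M. X \<omega> \<le> - real k}" for k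
  have "C k \<in> sets M" for k
    unfolding C_def using assms(2) borel_measurable_iff_le by blast
  moreover have "decseq C" unfolding decseq_def C_def by auto
  moreover have "(\<Inter>k. C k) = {}"
  proof (rule equals0I)
    fix \<omega> assume "\<omega> \<in> (\<Inter>k. C k)"
    obtain k where "- X \<omega> < real k" using reals_Archimedean2 by blast
    moreover have "X \<omega> \<le> - real k" using \<open>\<omega> \<in> (\<Inter>k. C k)\<close> unfolding C_def by blast
    ultimately show False by linarith
  qed
  ultimately have "(\<lambda>k. w (C k)) \<longlonglongrightarrow> 0"
    using assms(1) unfolding continuous_capacity_def by blast
  then show ?thesis unfolding C_def .
qed

definition kappa_objective ::
  "nat \<Rightarrow> (nat \<Rightarrow> real \<Rightarrow> real) \<Rightarrow> (nat \<Rightarrow> 'a set \<Rightarrow> real) \<Rightarrow> (nat \<Rightarrow> 'a set) \<Rightarrow> real" where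
  "kappa_objective n L w A = Min ((\<lambda>i. Max (insert (w i (A i) / lam_minus (L i))
                                     ((\<lambda>j. w j (A j) / lam_plus (L j)) ` ({..<n} - {i})))) ` {..<n})"

lemma kappa_eq_Inf_kappa_objective:
  "kappa M n L w = Inf (kappa_objective n L w ` partitions M n)"
  unfolding kappa_def kappa_objective_def by (simp add: setcompr_eq_image)

lemma kappa_objective_less_iff:
  assumes "0 < n"
  shows "kappa_objective n L w A < c \<longleftrightarrow>
    (\<exists>i<n. w i (A i) / lam_minus (L i) < c \<and> (\<forall>j<n. j \<noteq> i \<longrightarrow> w j (A j) / lam_plus (L j) < c))"
  using assms unfolding kappa_objective_def by (auto simp: Min_less_iff lessThan_empty_iff)

lemma kappa_objective_le:
  assumes "i < n" "w i (A i) / lam_minus (L i) \<le> c"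
    and "\<And>j. j < n \<Longrightarrow> j \<noteq> i \<Longrightarrow> w j (A j) / lam_plus (L j) \<le> c"
  shows "kappa_objective n L w A \<le> c"
proof -
  have "kappa_objective n L w A \<le> Max (insert (w i (A i) / lam_minus (L i))
                                     ((\<lambda>j. w j (A j) / lam_plus (L j)) ` ({..<n} - {i})))"
    unfolding kappa_objective_def using assms(1) by (intro Min_le) auto
  also have "\<dots> \<le> c" using assms by auto
  finally show ?thesis .
qed

lemma kappa_objective_nonneg:
  assumes "0 < n" "\<And>i. i < n \<Longrightarrow> 0 \<le> w i (A i)" "\<And>i. i < n \<Longrightarrow> 0 \<le> lam_minus (L i)"
  shows "0 \<le> kappa_objective n L w A"
proof -
  define m where "m = (\<lambda>i. Max (insert (w i (A i) / lam_minus (L i))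
                             ((\<lambda>j. w j (A j) / lam_plus (L j)) ` ({..<n} - {i}))))"
  have "0 \<le> m i" if "i < n" for i
  proof -
    have "0 \<le> w i (A i) / lam_minus (L i)" using assms(2,3)[OF that] by simp
    also have "\<dots> \<le> m i" unfolding m_def by (rule Max_ge) auto
    finally show ?thesis .
  qed
  then show ?thesis
    unfolding kappa_objective_def m_def[symmetric] using assms(1) by (subst Min_ge_iff) auto
qed

lemma partitions_nonempty:
  assumes "0 < n"
  shows "(\<lambda>i. if i = 0 then space M else {}) \<in> partitions M n"
proof -
  have "(\<Union>i<n. if i = 0 then space M else {}) = space M"
    using assms by (auto intro: exI[of _ 0])
  moreover have "disjoint_family_on (\<lambda>i. if i = 0 then space M else {}) {..<n}"
    unfolding disjoint_family_on_def by simp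
  ultimately show ?thesis unfolding partitions_def by simp
qed

lemma kappa_le_kappa_objective:
  assumes "0 < n" "\<And>i. i < n \<Longrightarrow> capacity M (w i)" "\<And>i. i < n \<Longrightarrow> 0 \<le> lam_minus (L i)"
    and "A \<in> partitions M n"
  shows "kappa M n L w \<le> kappa_objective n L w A"
proof -
  have "0 \<le> kappa_objective n L w B" if "B \<in> partitions M n" for B
  proof (rule kappa_objective_nonneg[OF assms(1) _ assms(3)])
    show "0 \<le> w i (B i)" if "i < n" for i
      using capacity_nonneg[OF assms(2)[OF that]] \<open>B \<in> partitions M n\<close> that
      unfolding partitions_def by blast
  qed
  then have "bdd_below (kappa_objective n L w ` partitions M n)"
    by (rule bdd_belowI2)
  then show ?thesis
    unfolding kappa_eq_Inf_kappa_objective by (rule cInf_lower[OF imageI[OF assms(4)]])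
qed

lemma kappa_lessE:
  assumes "0 < n" "kappa M n L w < c"
  obtains A where "A \<in> partitions M n" "kappa_objective n L w A < c"
proof -
  have "kappa_objective n L w ` partitions M n \<noteq> {}"
    using partitions_nonempty[OF assms(1)] by blast
  from cInf_lessD[OF this assms(2)[unfolded kappa_eq_Inf_kappa_objective]] that show ?thesis
    by blast
qed

lemma disjointed_in_partitions:
  assumes "\<And>i. i < n \<Longrightarrow> A i \<in> sets M" "(\<Union>i<n. A i) = space M"
  shows "disjointed A \<in> partitions M n"
proof -
  have "disjointed A i \<in> sets M" if "i < n" for i
  proof -
    have "(\<Union>j\<in>{0..<i}. A j) \<in> sets M" using assms(1) that by (intro sets.finite_UN) auto
    then show ?thesis unfolding disjointed_def using assms(1)[OF that] by (rule sets.Diff[rotated])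
  qed
  moreover have "(\<Union>i<n. disjointed A i) = space M"
    using finite_UN_disjointed_eq[of A n] assms(2) by (simp add: atLeast0LessThan)
  moreover have "disjoint_family_on (disjointed A) {..<n}"
    using disjoint_family_disjointed by (rule disjoint_family_on_mono[rotated]) simp
  ultimately show ?thesis unfolding partitions_def by simp
qed

text \<open>Since capacities are monotone, covers may replace partitions in the definition of kappa.\<close>

lemma kappa_le_if_cover:
  assumes "0 < n" "\<And>j. j < n \<Longrightarrow> capacity M (w j)"
    and "\<And>j. j < n \<Longrightarrow> 0 < lam_minus (L j)" "\<And>j. j < n \<Longrightarrow> 0 < lam_plus (L j)"
    and "\<And>j. j < n \<Longrightarrow> A j \<in> sets M" "(\<Union>j<n. A j) = space M"
    and "i < n" "w i (A i) \<le> c * lam_minus (L i)"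
    and "\<And>j. j < n \<Longrightarrow> j \<noteq> i \<Longrightarrow> w j (A j) \<le> c * lam_plus (L j)"
  shows "kappa M n L w \<le> c"
proof -
  define B where "B = disjointed A"
  have B: "B \<in> partitions M n"
    unfolding B_def using assms(5,6) by (rule disjointed_in_partitions)
  have wB: "w j (B j) \<le> w j (A j)" if "j < n" for j
  proof (rule capacity_mono[OF assms(2)[OF that] _ assms(5)[OF that]])
    show "B j \<in> sets M" using B that unfolding partitions_def by blast
    show "B j \<subseteq> A j" unfolding B_def by (rule disjointed_subset)
  qed
  have "kappa M n L w \<le> kappa_objective n L w B"
    using assms(1-3) B by (intro kappa_le_kappa_objective) (auto intro: less_imp_le)
  also have "\<dots> \<le> c"
  proof (rule kappa_objective_le[OF assms(7)])
    show "w i (B i) / lam_minus (L i) \<le> c"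
      unfolding pos_divide_le_eq[OF assms(3)[OF assms(7)]] using wB[OF assms(7)] assms(8) by linarith
    show "w j (B j) / lam_plus (L j) \<le> c" if "j < n" "j \<noteq> i" for j
      unfolding pos_divide_le_eq[OF assms(4)[OF that(1)]] using wB[OF that(1)] assms(9)[OF that]
      by linarith
  qed
  finally show ?thesis .
qed

lemma admissible_sets_of_dominated_cover:
  assumes "\<And>j. j < n \<Longrightarrow> capacity M (w j)"
    and "\<And>j. j < n \<Longrightarrow> A j \<in> sets M" "space M \<subseteq> (\<Union>j<n. A j)"
    and "i < n" "\<And>y. w i (A i) \<le> L i y"
    and "\<And>j. j < n \<Longrightarrow> j \<noteq> i \<Longrightarrow> w j (A j) \<le> L j (y0 j)"
    and "G \<in> sets M"
  shows "G \<in> admissible_sets M n L w x"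
proof -
  define B where "B j = A j \<inter> G" for j
  define y where "y = y0(i := x - (\<Sum>j\<in>{..<n} - {i}. y0 j))"
  have "(\<Sum>j<n. y j) = y i + (\<Sum>j\<in>{..<n} - {i}. y j)"
    using assms(4) by (subst sum.remove[of "{..<n}" i]) auto
  also have "(\<Sum>j\<in>{..<n} - {i}. y j) = (\<Sum>j\<in>{..<n} - {i}. y0 j)"
    by (rule sum.cong) (auto simp: y_def)
  finally have "(\<Sum>j<n. y j) = x" by (simp add: y_def)
  moreover have "G = (\<Union>j<n. B j)"
    using assms(3) sets.sets_into_space[OF assms(7)] unfolding B_def by blast
  moreover have B: "B j \<in> sets M" if "j < n" for j
    unfolding B_def using assms(2)[OF that] assms(7) by (rule sets.Int)
  moreover have "w j (B j) \<le> L j (y j)" if "j < n" for j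
  proof -
    have "w j (B j) \<le> w j (A j)"
      using capacity_mono[OF assms(1)[OF that] B[OF that] assms(2)[OF that]] unfolding B_def by blast
    also have "\<dots> \<le> L j (y j)"
      using assms(5,6) that by (cases "j = i") (auto simp: y_def)
    finally show ?thesis .
  qed
  ultimately show ?thesis unfolding admissible_sets_def by blast
qed

lemma Gamma_eq_minf_iff:
  "Gamma M n L w X = - \<infinity> \<longleftrightarrow>
    (\<forall>t. \<exists>x<t. {\<omega>\<in>space M. x < X \<omega>} \<in> admissible_sets M n L w x)"
  (is "_ \<longleftrightarrow> (\<forall>t. \<exists>x<t. ?adm x)")
proof
  assume minf: "Gamma M n L w X = - \<infinity>"
  show "\<forall>t. \<exists>x<t. ?adm x"
  proof
    fix t
    have "Inf {ereal x | x. ?adm x} < ereal t" using minf unfolding Gamma_def by simp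
    then show "\<exists>x<t. ?adm x" unfolding Inf_less_iff by auto
  qed
next
  assume adm: "\<forall>t. \<exists>x<t. ?adm x"
  show "Gamma M n L w X = - \<infinity>"
  proof (rule ereal_bot)
    fix t
    obtain x where "x < t" "?adm x" using adm by blast
    then have "Gamma M n L w X \<le> ereal x" unfolding Gamma_def by (auto intro: Inf_lower)
    also have "\<dots> \<le> ereal t" using \<open>x < t\<close> by simp
    finally show "Gamma M n L w X \<le> ereal t" .
  qed
qed

lemma Gamma_eq_minf_if_kappa_less_1:
  fixes X :: "'a \<Rightarrow> real"
  assumes "0 < n" "\<And>i. i < n \<Longrightarrow> L i \<in> H_I" "\<And>i. i < n \<Longrightarrow> 0 < lam_minus (L i)"
    and "\<And>i. i < n \<Longrightarrow> capacity M (w i)"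
    and "kappa M n L w < 1" "X \<in> borel_measurable M"
  shows "Gamma M n L w X = - \<infinity>"
proof -
  obtain A where A: "A \<in> partitions M n" and "kappa_objective n L w A < 1"
    using kappa_lessE[OF assms(1,5)] .
  then obtain i where i: "i < n" and "w i (A i) / lam_minus (L i) < 1"
    and others: "\<And>j. j < n \<Longrightarrow> j \<noteq> i \<Longrightarrow> w j (A j) / lam_plus (L j) < 1"
    unfolding kappa_objective_less_iff[OF assms(1)] by blast
  then have "w i (A i) < lam_minus (L i)" using assms(3)[OF i] by (simp add: divide_less_eq)
  then have dominated: "w i (A i) \<le> L i y" for y
    using lam_minus_le[OF assms(2)[OF i]] by (meson less_imp_le order_trans)
  have "\<exists>y. w j (A j) \<le> L j y" if j: "j < n" "j \<noteq> i" for j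
  proof -
    have "w j (A j) < lam_plus (L j)"
      using others[OF j] lam_plus_pos[OF assms(2)[OF j(1)]] by (simp add: divide_less_eq)
    then obtain y where "w j (A j) < L j y" by (rule less_lam_plusE[OF assms(2)[OF j(1)]])
    then show ?thesis by (blast intro: less_imp_le)
  qed
  then obtain y0 where y0: "\<And>j. j < n \<Longrightarrow> j \<noteq> i \<Longrightarrow> w j (A j) \<le> L j (y0 j)" by metis
  have "{\<omega>\<in>space M. x < X \<omega>} \<in> admissible_sets M n L w x" for x
  proof (rule admissible_sets_of_dominated_cover[where M = M and w = w and L = L and A = A,
        OF assms(4) _ _ i dominated y0])
    show "A j \<in> sets M" if "j < n" for j using A that unfolding partitions_def by blast
    show "space M \<subseteq> (\<Union>j<n. A j)" using A unfolding partitions_def by blast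
    show "{\<omega>\<in>space M. x < X \<omega>} \<in> sets M" using assms(6) borel_measurable_iff_greater by blast
  qed
  then show ?thesis unfolding Gamma_eq_minf_iff using lt_ex by blast
qed

lemma H_I_uniform_left_tailE:
  fixes n :: nat
  assumes "\<And>i. i < n \<Longrightarrow> L i \<in> H_I" "\<And>i. i < n \<Longrightarrow> lam_minus (L i) < c i"
  obtains N where "\<And>i y. i < n \<Longrightarrow> y \<le> N \<Longrightarrow> L i y < c i"
proof -
  have "\<forall>i\<in>{..<n}. eventually (\<lambda>y. L i y < c i) at_bot"
    by (simp add: H_I_eventually_less assms)
  then have "eventually (\<lambda>y. \<forall>i\<in>{..<n}. L i y < c i) at_bot"
    by (rule eventually_ball_finite[rotated]) simp
  then show ?thesis using that unfolding eventually_at_bot_linorder by auto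
qed

lemma continuous_capacities_lower_tailE:
  fixes n :: nat and X :: "'a \<Rightarrow> real"
  assumes "\<And>i. i < n \<Longrightarrow> continuous_capacity M (w i)" "X \<in> borel_measurable M"
    and "\<And>i. i < n \<Longrightarrow> 0 < c i"
  obtains k where "\<And>i. i < n \<Longrightarrow> w i {\<omega>\<in>space M. X \<omega> \<le> - real k} < c i"
proof -
  have "\<forall>i\<in>{..<n}. eventually (\<lambda>k. w i {\<omega>\<in>space M. X \<omega> \<le> - real k} < c i) sequentially"
  proof
    fix i assume "i \<in> {..<n}"
    then have i: "i < n" by simp
    show "eventually (\<lambda>k. w i {\<omega>\<in>space M. X \<omega> \<le> - real k} < c i) sequentially"
      using continuous_capacity_lower_tail[OF assms(1)[OF i] assms(2)] assms(3)[OF i]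
      by (rule order_tendstoD(2))
  qed
  then have "eventually (\<lambda>k. \<forall>i\<in>{..<n}. w i {\<omega>\<in>space M. X \<omega> \<le> - real k} < c i) sequentially"
    by (rule eventually_ball_finite[rotated]) simp
  then show ?thesis using that unfolding eventually_sequentially by auto
qed

lemma kappa_le_if_admissible:
  assumes "0 < n" "\<And>i. i < n \<Longrightarrow> L i \<in> H_I" "\<And>i. i < n \<Longrightarrow> 0 < lam_minus (L i)"
    and "\<And>i. i < n \<Longrightarrow> capacity M (w i)" "\<And>i. i < n \<Longrightarrow> subadditive_capacity M (w i)"
    and "G \<in> sets M" "G \<in> admissible_sets M n L w x" "x < real n * N"
    and "\<And>i y. i < n \<Longrightarrow> y \<le> N \<Longrightarrow> L i y \<le> a * lam_minus (L i)"
    and "\<And>i. i < n \<Longrightarrow> w i (space M - G) \<le> b * lam_minus (L i)"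
    and "1 \<le> a + b"
  shows "kappa M n L w \<le> a + b"
proof -
  obtain A y where A: "\<And>j. j < n \<Longrightarrow> A j \<in> sets M" and G: "G = (\<Union>j<n. A j)"
    and y: "(\<Sum>j<n. y j) = x" "\<And>j. j < n \<Longrightarrow> w j (A j) \<le> L j (y j)"
    using assms(7) unfolding admissible_sets_def by blast
  have "\<exists>i<n. y i \<le> N"
  proof (rule ccontr)
    assume "\<not> (\<exists>i<n. y i \<le> N)"
    then have "(\<Sum>j<n. N) < (\<Sum>j<n. y j)" using assms(1) by (intro sum_strict_mono) auto
    then show False using assms(8) y(1) by simp
  qed
  then obtain i where i: "i < n" "y i \<le> N" by blast
  define C where "C = space M - G"
  have C: "C \<in> sets M" unfolding C_def using assms(6) by blast
  show ?thesis
  proof (rule kappa_le_if_cover[where A = "A(i := A i \<union> C)", OF assms(1,4,3) _ _ _ i(1)])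
    show "(A(i := A i \<union> C)) j \<in> sets M" if "j < n" for j
      using A[OF that] C by auto
    have "(\<Union>j<n. (A(i := A i \<union> C)) j) = (\<Union>j<n. A j) \<union> C"
    proof
      show "(\<Union>j<n. (A(i := A i \<union> C)) j) \<subseteq> (\<Union>j<n. A j) \<union> C"
        by (auto split: if_splits)
      show "(\<Union>j<n. A j) \<union> C \<subseteq> (\<Union>j<n. (A(i := A i \<union> C)) j)"
        using i(1) by (fastforce split: if_splits)
    qed
    then show "(\<Union>j<n. (A(i := A i \<union> C)) j) = space M"
      using sets.sets_into_space[OF assms(6)] unfolding G[symmetric] C_def by auto
    show "0 < lam_plus (L j)" if "j < n" for j using lam_plus_pos[OF assms(2)[OF that]] .
    have "w i (A i \<union> C) \<le> w i (A i) + w i C"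
      using assms(5)[OF i(1)] A[OF i(1)] C unfolding subadditive_capacity_def by blast
    also have "\<dots> \<le> a * lam_minus (L i) + b * lam_minus (L i)"
      using y(2)[OF i(1)] assms(9)[OF i] assms(10)[OF i(1)] unfolding C_def by linarith
    finally show "w i ((A(i := A i \<union> C)) i) \<le> (a + b) * lam_minus (L i)"
      by (simp add: algebra_simps)
    show "w j ((A(i := A i \<union> C)) j) \<le> (a + b) * lam_plus (L j)" if "j < n" "j \<noteq> i" for j
    proof -
      have "w j (A j) \<le> lam_plus (L j)"
        using y(2)[OF that(1)] le_lam_plus[OF assms(2)[OF that(1)]] by (rule order_trans)
      also have "\<dots> \<le> (a + b) * lam_plus (L j)"
        using assms(11) lam_plus_pos[OF assms(2)[OF that(1)]] by simp
      finally show ?thesis using that by simp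
    qed
  qed
qed

lemma kappa_le_1_if_Gamma_minf:
  fixes X :: "'a \<Rightarrow> real"
  assumes "0 < n" "\<And>i. i < n \<Longrightarrow> L i \<in> H_I" "\<And>i. i < n \<Longrightarrow> 0 < lam_minus (L i)"
    and "\<And>i. i < n \<Longrightarrow> capacity M (w i)" "\<And>i. i < n \<Longrightarrow> continuous_capacity M (w i)"
    and "\<And>i. i < n \<Longrightarrow> subadditive_capacity M (w i)"
    and "X \<in> borel_measurable M" "Gamma M n L w X = - \<infinity>"
  shows "kappa M n L w \<le> 1"
proof (rule field_le_epsilon)
  fix e :: real assume "0 < e"
  have above: "lam_minus (L i) < (1 + e / 2) * lam_minus (L i)" if "i < n" for i
    using assms(3)[OF that] \<open>0 < e\<close> by simp
  obtain N where N: "\<And>i y. i < n \<Longrightarrow> y \<le> N \<Longrightarrow> L i y < (1 + e / 2) * lam_minus (L i)"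
    using H_I_uniform_left_tailE[where n = n and L = L, OF assms(2) above] by blast
  have pos: "0 < e / 2 * lam_minus (L i)" if "i < n" for i
    using assms(3)[OF that] \<open>0 < e\<close> by simp
  obtain k where k: "\<And>i. i < n \<Longrightarrow> w i {\<omega>\<in>space M. X \<omega> \<le> - real k} < e / 2 * lam_minus (L i)"
    using continuous_capacities_lower_tailE[where n = n and w = w and c = "\<lambda>i. e / 2 * lam_minus (L i)",
      OF assms(5,7) pos] by blast
  obtain x where x: "x < min (- real k) (real n * N)"
    and adm: "{\<omega>\<in>space M. x < X \<omega>} \<in> admissible_sets M n L w x"
    using assms(8) unfolding Gamma_eq_minf_iff by blast
  define G where "G = {\<omega>\<in>space M. x < X \<omega>}"
  have G: "G \<in> sets M" unfolding G_def using assms(7) borel_measurable_iff_greater by blast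
  have tail: "{\<omega>\<in>space M. X \<omega> \<le> - real k} \<in> sets M"
    using assms(7) borel_measurable_iff_le by blast
  have "kappa M n L w \<le> (1 + e / 2) + e / 2"
  proof (rule kappa_le_if_admissible[OF assms(1-4,6) G adm[folded G_def]])
    show "x < real n * N" using x by simp
    show "L i y \<le> (1 + e / 2) * lam_minus (L i)" if "i < n" "y \<le> N" for i y
      using N[OF that] by simp
    show "w i (space M - G) \<le> e / 2 * lam_minus (L i)" if "i < n" for i
    proof -
      have "space M - G \<subseteq> {\<omega>\<in>space M. X \<omega> \<le> - real k}" using x unfolding G_def by auto
      then have "w i (space M - G) \<le> w i {\<omega>\<in>space M. X \<omega> \<le> - real k}"
        by (rule capacity_mono[OF assms(4)[OF that] sets.compl_sets[OF G] tail])
      then show ?thesis using k[OF that] by linarith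
    qed
    show "1 \<le> 1 + e / 2 + e / 2" using \<open>0 < e\<close> by simp
  qed
  then show "kappa M n L w \<le> 1 + e" by simp
qed

theorem mainTheorem13:
  fixes M :: "'a measure" and n :: nat
    and L :: "nat \<Rightarrow> real \<Rightarrow> real" and w :: "nat \<Rightarrow> 'a set \<Rightarrow> real"
  assumes "n \<ge> 1"
    and "\<forall>i<n. L i \<in> H_I"
    and "\<forall>i<n. 0 < lam_minus (L i) \<and> lam_minus (L i) \<le> lam_plus (L i) \<and> lam_plus (L i) < 1"
    and "\<forall>i<n. capacity M (w i) \<and> continuous_capacity M (w i) \<and> subadditive_capacity M (w i)"
  shows "(kappa M n L w < 1 \<longrightarrow> (\<forall>X\<in>borel_measurable M. Gamma M n L w X = -\<infinity>))
       \<and> (kappa M n L w > 1 \<longrightarrow> (\<forall>X\<in>borel_measurable M. Gamma M n L w X > -\<infinity>))"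
proof -
  have n: "0 < n" using assms(1) by simp
  have Lambda: "\<And>i. i < n \<Longrightarrow> L i \<in> H_I" "\<And>i. i < n \<Longrightarrow> 0 < lam_minus (L i)"
    using assms(2,3) by auto
  have cap: "\<And>i. i < n \<Longrightarrow> capacity M (w i)" "\<And>i. i < n \<Longrightarrow> continuous_capacity M (w i)"
    "\<And>i. i < n \<Longrightarrow> subadditive_capacity M (w i)"
    using assms(4) by auto
  show ?thesis
  proof (intro conjI impI ballI)
    show "Gamma M n L w X = - \<infinity>" if "kappa M n L w < 1" "X \<in> borel_measurable M" for X
      by (rule Gamma_eq_minf_if_kappa_less_1) (simp_all add: n Lambda cap that)
    show "Gamma M n L w X > - \<infinity>" if "kappa M n L w > 1" "X \<in> borel_measurable M" for X
    proof (rule ccontr)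
      assume "\<not> Gamma M n L w X > - \<infinity>"
      then have minf: "Gamma M n L w X = - \<infinity>" by (cases "Gamma M n L w X") auto
      have "kappa M n L w \<le> 1"
        by (rule kappa_le_1_if_Gamma_minf[where X = X]) (simp_all add: n Lambda cap that(2) minf)
      with that(1) show False by simp
    qed
  qed
qed

end
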